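(* Let $a\in\mathcal{T}_n\setminus\mathcal{S}_n$ and $G\le\mathcal{S}_n$. The following are equivalent: (1) $\langle a,G\rangle\setminus G=\langle a,\mathcal{S}_n\rangle\setminus\mathcal{S}_n$; (2) $\{b\in\langle a,G\rangle:\operatorname{rank}(b)=\operatorname{rank}(a)\}=\{b\in\langle a,\mathcal{S}_n\rangle:\operatorname{rank}(b)=\operatorname{rank}(a)\}$.
   Context: $\Omega=\{1,\ldots,n\}$, $\mathcal{T}_n$ is the monoid of all maps $\Omega\to\Omega$, $\mathcal{S}_n$ the symmetric group, $\langle\cdot\rangle$ denotes the generated semigroup, and $\operatorname{rank}(b)=|\Omega b|$. *)

theory Defs
  imports "HOL-Algebra.Sym_Groups"
begin

text \<open>Full transformation monoid on {1..n}, represented extensionally: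
  maps nat to nat that send {1..n} into itself and fix every point outside {1..n}.\<close>
definition full_trans :: "nat \<Rightarrow> (nat \<Rightarrow> nat) set" where
  "full_trans n = {f. (\<forall>x\<in>{1..n}. f x \<in> {1..n}) \<and> (\<forall>x. x \<notin> {1..n} \<longrightarrow> f x = x)}"

definition sym_set :: "nat \<Rightarrow> (nat \<Rightarrow> nat) set" where
  "sym_set n = {p. p permutes {1..n}}"

inductive_set gen_sg :: "('a \<Rightarrow> 'a) set \<Rightarrow> ('a \<Rightarrow> 'a) set" for X where
  base: "f \<in> X \<Longrightarrow> f \<in> gen_sg X"
| comp: "f \<in> gen_sg X \<Longrightarrow> g \<in> gen_sg X \<Longrightarrow> f \<circ> g \<in> gen_sg X"

definition rank_on :: "nat \<Rightarrow> (nat \<Rightarrow> nat) \<Rightarrow> nat" where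
  "rank_on n b = card (b ` {1..n})"

end

theory Submission
  imports Defs
begin

text \<open>A product of transformations of \<open>{1..n}\<close> is a permutation only if both factors are, so the
  units of \<open>\<langle>a, G\<rangle>\<close> are those of \<open>G\<close>, and every non-unit of \<open>\<langle>a, G\<rangle>\<close> is a non-unit of
  \<open>\<langle>a, \<S>\<^sub>n\<rangle>\<close>. Conversely every non-unit of \<open>\<langle>a, \<S>\<^sub>n\<rangle>\<close> is a product of maps \<open>g a h\<close> with
  \<open>g, h \<in> \<S>\<^sub>n\<close>, and these have the rank of \<open>a\<close>. Elements of rank \<open>rank a < n\<close> are never units, so
  both conditions say that \<open>\<langle>a, G\<rangle>\<close> and \<open>\<langle>a, \<S>\<^sub>n\<rangle>\<close> contain the same maps \<open>g a h\<close>.\<close>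

lemma gen_sg_least:
  assumes "X \<subseteq> Y" and "\<And>f g. f \<in> Y \<Longrightarrow> g \<in> Y \<Longrightarrow> f \<circ> g \<in> Y"
  shows "gen_sg X \<subseteq> Y"
proof
  fix w assume "w \<in> gen_sg X"
  then show "w \<in> Y" by induction (use assms in blast)+
qed

lemma gen_sg_subset_gen_sg: "X \<subseteq> gen_sg Y \<Longrightarrow> gen_sg X \<subseteq> gen_sg Y"
  by (rule gen_sg_least) (auto intro: gen_sg.comp)

lemma gen_sg_mono: "X \<subseteq> Y \<Longrightarrow> gen_sg X \<subseteq> gen_sg Y"
  by (rule gen_sg_subset_gen_sg) (auto intro: gen_sg.base)

lemma gen_sg_closed:
  assumes "\<And>f g. f \<in> G \<Longrightarrow> g \<in> G \<Longrightarrow> f \<circ> g \<in> G"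
  shows "gen_sg G = G"
  using gen_sg_least[OF subset_refl assms] gen_sg.base by blast

lemma full_trans_comp: "f \<in> full_trans n \<Longrightarrow> g \<in> full_trans n \<Longrightarrow> f \<circ> g \<in> full_trans n"
  by (auto simp: full_trans_def)

lemma sym_set_subset_full_trans: "sym_set n \<subseteq> full_trans n"
  unfolding sym_set_def full_trans_def
  using permutes_in_image permutes_not_in by fastforce

lemma sym_set_comp: "p \<in> sym_set n \<Longrightarrow> q \<in> sym_set n \<Longrightarrow> p \<circ> q \<in> sym_set n"
  by (simp add: sym_set_def permutes_compose)

lemma id_in_sym_set: "id \<in> sym_set n"
  by (simp add: sym_set_def permutes_id)

lemma image_sym_set: "p \<in> sym_set n \<Longrightarrow> p ` {1..n} = {1..n}"
  by (simp add: sym_set_def permutes_image)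

lemma full_trans_in_sym_set_iff:
  assumes "f \<in> full_trans n"
  shows "f \<in> sym_set n \<longleftrightarrow> inj_on f {1..n}"
proof
  assume "f \<in> sym_set n"
  then show "inj_on f {1..n}"
    by (auto simp: sym_set_def dest: permutes_inj intro: inj_on_subset)
next
  assume inj: "inj_on f {1..n}"
  have "f ` {1..n} \<subseteq> {1..n}" using assms by (auto simp: full_trans_def)
  then have "bij_betw f {1..n} {1..n}"
    using endo_inj_surj[OF _ _ inj] inj by (simp add: bij_betw_def)
  then show "f \<in> sym_set n"
    using assms by (auto simp: sym_set_def full_trans_def intro: bij_imp_permutes)
qed

lemma comp_in_sym_set_imp:
  assumes f: "f \<in> full_trans n" and g: "g \<in> full_trans n" and "f \<circ> g \<in> sym_set n"
  shows "f \<in> sym_set n \<and> g \<in> sym_set n"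
proof -
  have inj_fg: "inj_on (f \<circ> g) {1..n}"
    using assms full_trans_comp full_trans_in_sym_set_iff by blast
  then have gS: "g \<in> sym_set n"
    using g full_trans_in_sym_set_iff inj_on_imageI2 by blast
  have "inj_on f (g ` {1..n})" using inj_fg comp_inj_on_iff inj_on_imageI by blast
  then have "f \<in> sym_set n" using f full_trans_in_sym_set_iff image_sym_set[OF gS] by simp
  with gS show ?thesis by blast
qed

lemma gen_sg_in_sym_set:
  assumes "X \<subseteq> full_trans n" and "w \<in> gen_sg X" and "w \<in> sym_set n"
  shows "w \<in> gen_sg (X \<inter> sym_set n)"
  using assms(2,3)
proof induction
  case (base f)
  then show ?case by (simp add: gen_sg.base)
next
  case (comp f g)
  have "f \<in> full_trans n" "g \<in> full_trans n"
    using gen_sg_least[OF assms(1) full_trans_comp] comp.hyps by auto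
  then show ?case
    using comp comp_in_sym_set_imp by (blast intro: gen_sg.comp)
qed

lemma gen_sg_insert_minus_monoid:
  assumes closed: "\<And>f g. f \<in> S \<Longrightarrow> g \<in> S \<Longrightarrow> f \<circ> g \<in> S" and "id \<in> S"
  shows "gen_sg (insert a S) - S \<subseteq> gen_sg {g \<circ> a \<circ> h | g h. g \<in> S \<and> h \<in> S}"
    (is "_ \<subseteq> gen_sg ?U")
proof -
  txt \<open>The induction needs the claim for all two-sided unit multiples \<open>g w h\<close>, not only for \<open>w\<close>.\<close>
  have "w \<in> S \<or> (\<forall>g\<in>S. \<forall>h\<in>S. g \<circ> w \<circ> h \<in> gen_sg ?U)"
    if "w \<in> gen_sg (insert a S)" for w
    using that
  proof induction
    case (base f)
    then show ?case by (blast intro: gen_sg.base)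
  next
    case (comp f k)
    consider "f \<in> S" "k \<in> S" | "f \<in> S" "k \<notin> S" | "f \<notin> S" "k \<in> S" | "f \<notin> S" "k \<notin> S"
      by blast
    then show ?case
    proof cases
      case 1
      then show ?thesis using closed by blast
    next
      case 2
      have "g \<circ> (f \<circ> k) \<circ> h \<in> gen_sg ?U" if "g \<in> S" "h \<in> S" for g h
      proof -
        have "(g \<circ> f) \<circ> k \<circ> h \<in> gen_sg ?U" using comp.IH(2) 2 closed that by blast
        then show ?thesis by (simp add: comp_assoc)
      qed
      then show ?thesis by blast
    next
      case 3
      have "g \<circ> (f \<circ> k) \<circ> h \<in> gen_sg ?U" if "g \<in> S" "h \<in> S" for g h
      proof -
        have "g \<circ> f \<circ> (k \<circ> h) \<in> gen_sg ?U" using comp.IH(1) 3 closed that by blast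
        then show ?thesis by (simp add: comp_assoc)
      qed
      then show ?thesis by blast
    next
      case 4
      have "g \<circ> (f \<circ> k) \<circ> h \<in> gen_sg ?U" if "g \<in> S" "h \<in> S" for g h
      proof -
        have "g \<circ> f \<circ> id \<in> gen_sg ?U" using comp.IH(1) 4 that \<open>id \<in> S\<close> by blast
        moreover have "id \<circ> k \<circ> h \<in> gen_sg ?U" using comp.IH(2) 4 that \<open>id \<in> S\<close> by blast
        ultimately have "(g \<circ> f \<circ> id) \<circ> (id \<circ> k \<circ> h) \<in> gen_sg ?U" by (rule gen_sg.comp)
        then show ?thesis by (simp add: comp_assoc)
      qed
      then show ?thesis by blast
    qed
  qed
  then show ?thesis using \<open>id \<in> S\<close> by fastforce
qed

lemma rank_on_sym_set: "p \<in> sym_set n \<Longrightarrow> rank_on n p = n"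
  using image_sym_set by (simp add: rank_on_def)

lemma rank_on_not_sym_set:
  assumes "f \<in> full_trans n - sym_set n"
  shows "rank_on n f \<noteq> n"
  using assms full_trans_in_sym_set_iff[of f n] inj_on_iff_eq_card[of "{1..n}" f]
  by (auto simp: rank_on_def)

lemma rank_on_comp_sym_set:
  assumes "g \<in> sym_set n" and "h \<in> sym_set n"
  shows "rank_on n (g \<circ> a \<circ> h) = rank_on n a"
proof -
  have "(g \<circ> a \<circ> h) ` {1..n} = g ` a ` h ` {1..n}"
    by (simp add: image_comp)
  also have "\<dots> = g ` a ` {1..n}" using image_sym_set[OF assms(2)] by simp
  finally have "(g \<circ> a \<circ> h) ` {1..n} = g ` a ` {1..n}" .
  moreover have "inj g" using assms(1) by (simp add: sym_set_def permutes_inj)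
  ultimately show ?thesis by (simp add: rank_on_def card_image inj_on_subset)
qed

lemma subgroup_sym_group_subset: "subgroup G (sym_group n) \<Longrightarrow> G \<subseteq> sym_set n"
  using subgroup.subset by (fastforce simp: sym_group_carrier sym_set_def)

lemma gen_sg_subgroup_sym_group:
  assumes "subgroup G (sym_group n)"
  shows "gen_sg G = G"
  using subgroup.m_closed[OF assms] by (intro gen_sg_closed) (simp add: sym_group_mult)

lemma gen_sg_insert_subgroup_minus:
  assumes a: "a \<in> full_trans n - sym_set n" and G: "subgroup G (sym_group n)"
  shows "gen_sg (insert a G) - G \<subseteq> gen_sg (insert a (sym_set n)) - sym_set n"
proof -
  have GS: "G \<subseteq> sym_set n" using subgroup_sym_group_subset[OF G] .
  then have "insert a G \<subseteq> full_trans n" using a sym_set_subset_full_trans by blast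
  then have "gen_sg (insert a G) \<inter> sym_set n \<subseteq> gen_sg (insert a G \<inter> sym_set n)"
    using gen_sg_in_sym_set by blast
  also have "insert a G \<inter> sym_set n = G" using a GS by auto
  finally have "gen_sg (insert a G) \<inter> sym_set n \<subseteq> G"
    using gen_sg_subgroup_sym_group[OF G] by simp
  then show ?thesis using gen_sg_mono[of "insert a G" "insert a (sym_set n)"] GS by blast
qed

theorem lemma8p2:
  fixes n :: nat and a :: "nat \<Rightarrow> nat" and G :: "(nat \<Rightarrow> nat) set"
  assumes "a \<in> full_trans n - sym_set n"
    and "subgroup G (sym_group n)"
  shows "(gen_sg (insert a G) - G = gen_sg (insert a (sym_set n)) - sym_set n)
     \<longleftrightarrow> ({b \<in> gen_sg (insert a G). rank_on n b = rank_on n a}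
          = {b \<in> gen_sg (insert a (sym_set n)). rank_on n b = rank_on n a})"
proof -
  have GS: "G \<subseteq> sym_set n" using subgroup_sym_group_subset[OF assms(2)] .
  have not_unit: "b \<notin> sym_set n" if "rank_on n b = rank_on n a" for b
    using that rank_on_sym_set[of b n] rank_on_not_sym_set[OF assms(1)] by auto
  show ?thesis
  proof
    assume "gen_sg (insert a G) - G = gen_sg (insert a (sym_set n)) - sym_set n"
    then have "b \<in> gen_sg (insert a G) \<longleftrightarrow> b \<in> gen_sg (insert a (sym_set n))"
      if "rank_on n b = rank_on n a" for b
      using not_unit[OF that] GS by blast
    then show "{b \<in> gen_sg (insert a G). rank_on n b = rank_on n a}
        = {b \<in> gen_sg (insert a (sym_set n)). rank_on n b = rank_on n a}"
      by blast
  next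
    assume same_rank: "{b \<in> gen_sg (insert a G). rank_on n b = rank_on n a}
        = {b \<in> gen_sg (insert a (sym_set n)). rank_on n b = rank_on n a}"
    have "g \<circ> a \<circ> h \<in> gen_sg (insert a G)" if "g \<in> sym_set n" "h \<in> sym_set n" for g h
    proof -
      have "g \<circ> a \<circ> h \<in> gen_sg (insert a (sym_set n))"
        using that by (intro gen_sg.comp gen_sg.base) auto
      then have "g \<circ> a \<circ> h \<in> {b \<in> gen_sg (insert a (sym_set n)). rank_on n b = rank_on n a}"
        using rank_on_comp_sym_set[OF that] by simp
      then show ?thesis unfolding same_rank[symmetric] by simp
    qed
    then have "{g \<circ> a \<circ> h | g h. g \<in> sym_set n \<and> h \<in> sym_set n} \<subseteq> gen_sg (insert a G)"
      by blast
    then have "gen_sg (insert a (sym_set n)) - sym_set n \<subseteq> gen_sg (insert a G)"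
      using gen_sg_insert_minus_monoid[OF sym_set_comp id_in_sym_set] gen_sg_subset_gen_sg
      by blast
    then show "gen_sg (insert a G) - G = gen_sg (insert a (sym_set n)) - sym_set n"
      using GS by (intro equalityI gen_sg_insert_subgroup_minus[OF assms]) blast
  qed
qed

end
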